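(* Let $d\in\mathbb N$, $\alpha\in[0,d)$, and let $p>1$ with $\alpha p<d$. Let $\mathcal U_n=\{\mathbf U_1,\dots,\mathbf U_n\}$ consist of $n$ independent uniform random points in $(0,1)^d$, each carrying an independent uniform $[0,1]$ mark. Then the ONG functional satisfies $$ \sup_{n\in\mathbb N}E\left[\xi(n^{1/d}\mathbf U_1;n^{1/d}\mathcal U_n)^p\right]<\infty. $$
   Context: Points carry marks in $[0,1]$ (scaling $n^{1/d}\mathcal U_n$ rescales positions only, keeping marks). For a finite marked set $\mathcal X\subset\mathbb R^d$ and $\mathbf x\in\mathcal X$ with mark $T(\mathbf x)$, $D(\mathbf x;\mathcal X)$ is the Euclidean distance from $\mathbf x$ to its nearest neighbour among the points $\mathbf y\in\mathcal X\setminus\{\mathbf x\}$ with mark $T(\mathbf y)<T(\mathbf x)$; the ONG functional is $\xi(\mathbf x;\mathcal X)=D(\mathbf x;\mathcal X)^\alpha$ if such a point exists and $\xi(\mathbf x;\mathcal X)=0$ otherwise. *)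

theory Defs
  imports "HOL-Analysis.Analysis"
begin

text \<open>Marked points: pairs (position, mark).\<close>
definition ong_xi :: "real \<Rightarrow> ('a::metric_space \<times> real) \<Rightarrow> ('a \<times> real) set \<Rightarrow> real" where
  "ong_xi \<alpha> x X =
     (let S = {y \<in> X - {x}. snd y < snd x}
      in if S = {} then 0 else (INF y\<in>S. dist (fst x) (fst y)) powr \<alpha>)"

definition scale_marked :: "real \<Rightarrow> ('a::real_vector \<times> real) \<Rightarrow> ('a \<times> real)" where
  "scale_marked c x = (c *\<^sub>R fst x, snd x)"

definition marked_unif :: "((real^'d) \<times> real) measure" where
  "marked_unif = uniform_measure lborel (box 0 One \<times> {0..1})"

end

(*
  Write D for the distance from n^(1/d) U_1 to its nearest neighbour of smaller mark, so that
  the p-th moment of the ONG functional is E[D^(alpha p)]. If 2^k < D, then no other point U_j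
  lies in a cube of side s = 2^k / (n^(1/d) d) inside (0,1)^d next to U_1 with a mark below
  T(U_1): every point of that cube is closer than d s to U_1. Given U_1 with mark t this has
  probability (1 - s^d t)^(n-1), and integrating over t gives at most 1/(n s^d) = d^d 2^(-kd).
  Splitting according to the dyadic scale of D,
    E[D^(alpha p)] <= 1 + sum_k 2^((k+1) alpha p) d^d 2^(-kd),
  a geometric series that converges because alpha p < d and does not depend on n.
*)
theory Submission
  imports Defs "HOL-Probability.Probability"
begin

lemma emeasure_lborel_Times:
  fixes A :: "'a::euclidean_space set" and B :: "'b::euclidean_space set"
  assumes "A \<in> sets borel" "B \<in> sets borel"
  shows "emeasure (lborel :: ('a \<times> 'b) measure) (A \<times> B) = emeasure lborel A * emeasure lborel B"
  using assms by (simp add: lborel_prod[symmetric] lborel.emeasure_pair_measure_Times)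

lemma Times_in_sets_borel:
  fixes A :: "'a::euclidean_space set" and B :: "'b::euclidean_space set"
  assumes "A \<in> sets borel" "B \<in> sets borel"
  shows "A \<times> B \<in> sets (borel :: ('a \<times> 'b) measure)"
  using assms by (metis lborel_prod pair_measureI sets_lborel)

lemma emeasure_lborel_marked_unit_cube:
  "emeasure (lborel :: ((real^'d) \<times> real) measure) (box 0 One \<times> {0..1}) = 1"
  by (simp add: emeasure_lborel_Times emeasure_lborel_box_eq inner_diff_left)

lemma prob_space_marked_unif: "prob_space marked_unif"
  unfolding marked_unif_def
  by (rule prob_space_uniform_measure) (simp_all add: emeasure_lborel_marked_unit_cube)

lemma sets_marked_unif [measurable_cong]: "sets marked_unif = sets borel"
  by (simp add: marked_unif_def)

lemma space_marked_unif [simp]: "space marked_unif = UNIV"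
  by (simp add: marked_unif_def)

lemma AE_marked_unif: "AE x in marked_unif. x \<in> box 0 One \<times> {0..1}"
  unfolding marked_unif_def
  by (rule AE_uniform_measureI) (auto intro: Times_in_sets_borel)

lemma AE_PiM_marked_unif:
  fixes n :: nat
  shows "AE U in PiM {..<n} (\<lambda>_. marked_unif :: ((real^'d) \<times> real) measure).
     \<forall>i\<in>{..<n}. U i \<in> box 0 One \<times> {0..1}"
  by (intro AE_finite_allI AE_PiM_component prob_space_marked_unif AE_marked_unif) simp_all

lemma prod_indicator_eq_indicator_Ball:
  "finite J \<Longrightarrow> (\<Prod>j\<in>J. indicator A (y j) :: ennreal) = indicator {y. \<forall>j\<in>J. y j \<in> A} y"
  by (induction J rule: finite_induct) (auto simp: indicator_def)

lemma emeasure_PiM_avoid: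
  assumes "prob_space M" and J: "finite J" "i \<notin> J"
    and [measurable]: "Measurable.pred (M \<Otimes>\<^sub>M M) (\<lambda>(x, y). y \<in> H x)"
  shows "emeasure (PiM (insert i J) (\<lambda>_. M)) {U \<in> space (PiM (insert i J) (\<lambda>_. M)). \<forall>j\<in>J. U j \<notin> H (U i)}
       = (\<integral>\<^sup>+x. emeasure M {y \<in> space M. y \<notin> H x} ^ card J \<partial>M)"
    (is "emeasure ?P ?E = _")
proof -
  interpret prob_space M by fact
  interpret product_sigma_finite "\<lambda>_. M"
    by (simp add: product_sigma_finite_def sigma_finite_measure_axioms)
  note J[measurable]
  have [measurable]: "?E \<in> sets ?P" by measurable
  have section_avoid[measurable]: "{y \<in> space M. y \<notin> H x} \<in> sets M" if "x \<in> space M" for x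
    using that by measurable
  have "emeasure ?P ?E = (\<integral>\<^sup>+U. indicator ?E U \<partial>?P)"
    by simp
  also have "\<dots> = (\<integral>\<^sup>+x. \<integral>\<^sup>+y. indicator ?E (y(i := x)) \<partial>PiM J (\<lambda>_. M) \<partial>M)"
    using J by (intro product_nn_integral_insert_rev) auto
  also have "\<dots> = (\<integral>\<^sup>+x. \<integral>\<^sup>+y. (\<Prod>j\<in>J. indicator {y \<in> space M. y \<notin> H x} (y j)) \<partial>PiM J (\<lambda>_. M) \<partial>M)"
    using J by (intro nn_integral_cong, subst prod_indicator_eq_indicator_Ball)
      (auto simp: indicator_def space_PiM PiE_iff extensional_def)
  also have "\<dots> = (\<integral>\<^sup>+x. emeasure M {y \<in> space M. y \<notin> H x} ^ card J \<partial>M)"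
  proof (intro nn_integral_cong)
    fix x assume "x \<in> space M"
    then show "(\<integral>\<^sup>+y. (\<Prod>j\<in>J. indicator {y \<in> space M. y \<notin> H x} (y j)) \<partial>PiM J (\<lambda>_. M))
        = emeasure M {y \<in> space M. y \<notin> H x} ^ card J"
      using J by (subst product_nn_integral_prod) auto
  qed
  finally show ?thesis .
qed

lemma sum_Basis_cart_nth [simp]: "(\<Sum>b\<in>(Basis :: (real^'d) set). b $ i) = 1"
  using one_index[where 'a=real and 'n='d, of i] by (simp only: Cart_1 sum_component)

text \<open>For \<open>0 \<le> s \<le> 1\<close> this is a cube of side \<open>s\<close> inside \<open>(0,1)^d\<close> with \<open>u\<close> in its closure:
  in each coordinate it starts at \<open>u\<close> if it fits there and is pushed back against the face
  \<open>x\<^sub>i = 1\<close> otherwise.\<close>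
definition subcube :: "real \<Rightarrow> real^'d \<Rightarrow> (real^'d) set" where
  "subcube s u = box (\<chi> i. min (u $ i) (1 - s)) ((\<chi> i. min (u $ i) (1 - s)) + s *\<^sub>R One)"

lemma mem_subcube:
  "v \<in> subcube s u \<longleftrightarrow> (\<forall>i. min (u $ i) (1 - s) < v $ i \<and> v $ i < min (u $ i) (1 - s) + s)"
  by (simp add: subcube_def mem_box_cart)

lemma open_subcube: "open (subcube s u)"
  by (simp add: subcube_def open_box)

lemma emeasure_subcube: "0 \<le> s \<Longrightarrow> emeasure lborel (subcube s (u :: real^'d)) = s ^ CARD('d)"
  by (simp add: subcube_def emeasure_lborel_box_eq inner_diff_left inner_add_left prod_constant)

lemma subcube_subset_unit_cube:
  assumes "u \<in> box 0 One" "s \<le> 1"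
  shows "subcube s u \<subseteq> box 0 One"
proof
  fix v assume v: "v \<in> subcube s u"
  have "0 < v $ i \<and> v $ i < 1" for i
  proof -
    have "0 < u $ i" "u $ i < 1" using assms(1) by (simp_all add: mem_box_cart)
    then show ?thesis using assms(2) v[unfolded mem_subcube, rule_format, of i] by linarith
  qed
  then show "v \<in> box 0 One" by (simp add: mem_box_cart)
qed

lemma subcube_one:
  assumes "u \<in> box 0 One"
  shows "subcube 1 u = box 0 (One :: real^'d)"
proof -
  have "(\<chi> i. min (u $ i) (1 - 1)) = (0 :: real^'d)"
    using assms by (simp add: vec_eq_iff mem_box_cart)
  then show ?thesis
    by (simp add: subcube_def)
qed

lemma dist_lt_of_mem_subcube:
  fixes u v :: "real^'d"
  assumes "u \<in> box 0 One" "v \<in> subcube s u"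
  shows "dist u v < real CARD('d) * s"
proof -
  have "dist u v \<le> (\<Sum>i\<in>UNIV. \<bar>u $ i - v $ i\<bar>)"
    using norm_le_l1_cart[of "u - v"] by (simp add: dist_norm)
  also have "\<dots> < (\<Sum>i\<in>(UNIV :: 'd set). s)"
  proof (intro sum_strict_mono)
    fix i
    show "\<bar>u $ i - v $ i\<bar> < s"
    proof -
      have "u $ i < 1" using assms(1) by (simp add: mem_box_cart)
      then show ?thesis using assms(2)[unfolded mem_subcube, rule_format, of i] by linarith
    qed
  qed auto
  finally show ?thesis by simp
qed

definition near_lower :: "real \<Rightarrow> (real^'d) \<times> real \<Rightarrow> ((real^'d) \<times> real) set" where
  "near_lower s x = subcube s (fst x) \<times> {..<snd x}"

lemma pred_near_lower [measurable]:
  "Measurable.pred (marked_unif \<Otimes>\<^sub>M marked_unif) (\<lambda>(x, y). y \<in> near_lower s x)"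
proof -
  have [measurable]: "(\<lambda>x. fst x $ i) \<in> borel_measurable marked_unif" for i
    by (simp add: measurable_cong_sets[OF sets_marked_unif refl] borel_measurable_continuous_onI continuous_intros)
  have [measurable]: "snd \<in> borel_measurable marked_unif"
    by (simp add: measurable_cong_sets[OF sets_marked_unif refl] borel_measurable_continuous_onI continuous_intros)
  show ?thesis
    unfolding near_lower_def mem_Times_iff mem_subcube lessThan_iff by measurable
qed

lemma emeasure_marked_unif_near_lower:
  fixes x :: "(real^'d) \<times> real"
  assumes x: "x \<in> box 0 One \<times> {0..1}" and s: "0 \<le> s" "s \<le> 1"
  shows "emeasure marked_unif (near_lower s x) = s ^ CARD('d) * snd x"
proof -
  have "(box 0 One \<times> {0..1}) \<inter> near_lower s x = subcube s (fst x) \<times> {0..<snd x}"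
    using subcube_subset_unit_cube[of "fst x" s] x s by (auto simp: near_lower_def)
  then have "emeasure lborel ((box 0 One \<times> {0..1}) \<inter> near_lower s x) = s ^ CARD('d) * snd x"
    using x s by (simp add: emeasure_lborel_Times emeasure_subcube ennreal_mult borel_open open_subcube emeasure_lborel_Ico mem_Times_iff)
  then show ?thesis
    unfolding marked_unif_def
    by (subst emeasure_uniform_measure)
      (simp_all add: near_lower_def borel_open open_subcube emeasure_lborel_marked_unit_cube
        divide_ennreal_def Times_in_sets_borel)
qed

lemma emeasure_marked_unif_not_near_lower:
  fixes x :: "(real^'d) \<times> real"
  assumes x: "x \<in> box 0 One \<times> {0..1}" and s: "0 \<le> s" "s \<le> 1"
  shows "emeasure marked_unif {y. y \<notin> near_lower s x} = 1 - s ^ CARD('d) * snd x"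
proof -
  interpret prob_space "marked_unif :: ((real^'d) \<times> real) measure"
    by (rule prob_space_marked_unif)
  have "near_lower s x \<in> events"
    by (simp add: sets_marked_unif near_lower_def Times_in_sets_borel borel_open open_subcube)
  then have "emeasure marked_unif (space marked_unif - near_lower s x) = 1 - emeasure marked_unif (near_lower s x)"
    by (simp add: emeasure_compl emeasure_space_1 del: space_marked_unif)
  moreover have "space marked_unif - near_lower s x = {y. y \<notin> near_lower s x}"
    by auto
  moreover have "0 \<le> s ^ CARD('d) * snd x"
    using x s by auto
  ultimately show ?thesis
    using x s by (simp add: emeasure_marked_unif_near_lower flip: ennreal_1 ennreal_minus)
qed

lemma nn_integral_marked_unif_snd:
  assumes [measurable]: "g \<in> borel_measurable borel"
  shows "(\<integral>\<^sup>+x. g (snd x) \<partial>(marked_unif :: ((real^'d) \<times> real) measure))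
       = (\<integral>\<^sup>+t. g t * indicator {0..1} t \<partial>lborel)"
proof -
  let ?I = "\<integral>\<^sup>+t. g t * indicator {0..1} t \<partial>lborel"
  have [measurable]: "(\<lambda>x. g (snd x)) \<in> borel_measurable (borel :: ((real^'d) \<times> real) measure)"
    by (intro measurable_compose[OF _ assms] borel_measurable_continuous_onI continuous_intros)
  have "(\<integral>\<^sup>+x. g (snd x) \<partial>(marked_unif :: ((real^'d) \<times> real) measure))
      = (\<integral>\<^sup>+x. g (snd x) * indicator (box 0 (One :: real^'d) \<times> {0..1}) x \<partial>lborel)"
    unfolding marked_unif_def
    by (subst nn_integral_uniform_measure)
      (simp_all add: emeasure_lborel_marked_unit_cube Times_in_sets_borel divide_ennreal_def)
  also have "\<dots> = (\<integral>\<^sup>+x. g (snd x) * indicator (box 0 (One :: real^'d) \<times> {0..1}) x \<partial>(lborel \<Otimes>\<^sub>M lborel))"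
    by (simp only: lborel_prod)
  also have "\<dots> = (\<integral>\<^sup>+u. \<integral>\<^sup>+t. indicator (box 0 (One :: real^'d)) u * (g t * indicator {0..1} t) \<partial>lborel \<partial>lborel)"
    by (subst lborel.nn_integral_fst[symmetric]) (auto intro!: nn_integral_cong simp: indicator_times mult_ac)
  also have "\<dots> = (\<integral>\<^sup>+u. indicator (box 0 (One :: real^'d)) u * ?I \<partial>lborel)"
    by (simp add: nn_integral_cmult)
  also have "\<dots> = ?I"
    by (simp add: nn_integral_multc mult.commute emeasure_lborel_box_eq inner_diff_left)
  finally show ?thesis .
qed

lemma nn_integral_one_minus_power_le:
  fixes a :: real
  assumes a: "0 < a" "a \<le> 1"
  shows "(\<integral>\<^sup>+t. ennreal ((1 - a * t) ^ m) * indicator {0..1} t \<partial>lborel) \<le> 1 / (a * (real m + 1))"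
proof -
  define F where "F t = - ((1 - a * t) ^ Suc m) / (a * (real m + 1))" for t
  have "(\<integral>\<^sup>+t. ennreal ((1 - a * t) ^ m) * indicator {0..1} t \<partial>lborel) = ennreal (F 1 - F 0)"
  proof (rule nn_integral_FTC_Icc)
    fix t :: real assume "t \<in> {0..1}"
    have "((\<lambda>t. 1 - a * t) has_real_derivative - a) (at t)"
      by (auto intro!: derivative_eq_intros)
    from DERIV_power_Suc[OF this, of m]
    have "(F has_real_derivative - ((1 + real m) * (- a * (1 - a * t) ^ m)) / (a * (real m + 1))) (at t)"
      unfolding F_def by (intro DERIV_cdivide DERIV_minus)
    moreover have "- ((1 + real m) * (- a * (1 - a * t) ^ m)) / (a * (real m + 1)) = (1 - a * t) ^ m"
    proof -
      have "a * (real m + 1) \<noteq> 0" using a by simp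
      then show ?thesis by (simp add: field_simps)
    qed
    ultimately show "(F has_real_derivative (1 - a * t) ^ m) (at t)"
      by simp
    show "0 \<le> (1 - a * t) ^ m"
      using \<open>t \<in> {0..1}\<close> a by (simp add: mult_le_one)
  qed (auto simp: F_def)
  also have "F 1 - F 0 = (1 - (1 - a) ^ Suc m) / (a * (real m + 1))"
    by (simp add: F_def diff_divide_distrib)
  also have "\<dots> \<le> 1 / (a * (real m + 1))"
    using a by (intro divide_right_mono) auto
  finally show ?thesis
    by (simp add: ennreal_leI)
qed

definition no_near_lower :: "nat \<Rightarrow> real \<Rightarrow> (nat \<Rightarrow> (real^'d) \<times> real) set" where
  "no_near_lower n s =
     {U \<in> space (PiM {..<n} (\<lambda>_. marked_unif)). \<forall>j\<in>{1..<n}. U j \<notin> near_lower s (U 0)}"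

lemma sets_no_near_lower [measurable]:
  "0 < n \<Longrightarrow> no_near_lower n s \<in> sets (PiM {..<n} (\<lambda>_. marked_unif))"
  unfolding no_near_lower_def by measurable

lemma emeasure_no_near_lower_le:
  fixes s :: real and n :: nat
  assumes s: "0 < s" "s \<le> 1" and n: "0 < n"
  shows "emeasure (PiM {..<n} (\<lambda>_. marked_unif)) (no_near_lower n s :: (nat \<Rightarrow> (real^'d) \<times> real) set)
         \<le> 1 / (s ^ CARD('d) * n)"
proof -
  let ?M = "marked_unif :: ((real^'d) \<times> real) measure"
  have "{..<n} = insert 0 {1..<n}"
    using n by auto
  then have "emeasure (PiM {..<n} (\<lambda>_. ?M)) (no_near_lower n s)
      = (\<integral>\<^sup>+x. emeasure ?M {y. y \<notin> near_lower s x} ^ (n - 1) \<partial>?M)"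
    unfolding no_near_lower_def
    using emeasure_PiM_avoid[OF prob_space_marked_unif, of "{1..<n}" 0 "near_lower s"] by simp
  also have "\<dots> = (\<integral>\<^sup>+x. ennreal ((1 - s ^ CARD('d) * snd x) ^ (n - 1)) \<partial>?M)"
  proof (rule nn_integral_cong_AE)
    show "AE x in ?M. emeasure ?M {y. y \<notin> near_lower s x} ^ (n - 1) = ennreal ((1 - s ^ CARD('d) * snd x) ^ (n - 1))"
      using AE_marked_unif
    proof eventually_elim
      case (elim x)
      have "s ^ CARD('d) * snd x \<le> 1"
        using elim s by (auto intro!: mult_le_one power_le_one)
      then show ?case
        using elim s by (simp add: emeasure_marked_unif_not_near_lower ennreal_power)
    qed
  qed
  also have "\<dots> = (\<integral>\<^sup>+t. ennreal ((1 - s ^ CARD('d) * t) ^ (n - 1)) * indicator {0..1} t \<partial>lborel)"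
    by (rule nn_integral_marked_unif_snd) measurable
  also have "\<dots> \<le> 1 / (s ^ CARD('d) * (real (n - 1) + 1))"
    using s by (intro nn_integral_one_minus_power_le) (auto simp: power_le_one)
  finally show ?thesis
    using n by (simp add: of_nat_diff)
qed

lemma ex_dyadic_bracket:
  fixes r :: real
  assumes "1 < r"
  shows "\<exists>k::nat. 2 ^ k < r \<and> r \<le> 2 ^ (k + 1)"
proof -
  obtain n where "r < 2 ^ n"
    using real_arch_pow[of 2 r] by auto
  then obtain k where "\<forall>i\<le>k. \<not> r \<le> 2 ^ i" "r \<le> 2 ^ Suc k"
    using ex_least_nat_less[of "\<lambda>i. r \<le> 2 ^ i" n] assms by auto
  then show ?thesis
    by (auto simp: not_le)
qed

lemma ong_xi_cases:
  fixes X :: "('a::metric_space \<times> real) set"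
  assumes "finite X"
  obtains "ong_xi \<alpha> x X = 0"
  | y where "y \<in> X - {x}" "snd y < snd x" "ong_xi \<alpha> x X = dist (fst x) (fst y) powr \<alpha>"
      "\<And>z. z \<in> X - {x} \<Longrightarrow> snd z < snd x \<Longrightarrow> dist (fst x) (fst y) \<le> dist (fst x) (fst z)"
proof -
  define S where "S = {y \<in> X - {x}. snd y < snd x}"
  have "finite S"
    using assms by (simp add: S_def)
  show thesis
  proof (cases "S = {}")
    case True
    then show thesis
      using that(1) unfolding ong_xi_def Let_def S_def[symmetric] by simp
  next
    case False
    define y where "y = arg_min_on (\<lambda>z. dist (fst x) (fst z)) S"
    have "y \<in> S"
      unfolding y_def using \<open>finite S\<close> False by (rule arg_min_if_finite)
    have y_min: "dist (fst x) (fst y) \<le> dist (fst x) (fst z)" if "z \<in> S" for z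
      unfolding y_def using \<open>finite S\<close> False that by (rule arg_min_least)
    have "(INF z\<in>S. dist (fst x) (fst z)) = dist (fst x) (fst y)"
      using \<open>y \<in> S\<close> y_min by (intro cInf_eq_minimum) auto
    then have "ong_xi \<alpha> x X = dist (fst x) (fst y) powr \<alpha>"
      using False unfolding ong_xi_def Let_def S_def[symmetric] by simp
    then show thesis
      using that(2)[of y] \<open>y \<in> S\<close> y_min by (simp add: S_def)
  qed
qed

lemma ong_xi_powr_dyadic_cases:
  fixes X :: "('a::metric_space \<times> real) set"
  assumes "finite X" "0 \<le> \<alpha>" "0 \<le> p"
  obtains "ong_xi \<alpha> x X powr p \<le> 1"
  | k :: nat and y where "y \<in> X - {x}" "snd y < snd x"
      "ong_xi \<alpha> x X powr p \<le> 2 powr (real (k + 1) * (\<alpha> * p))"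
      "\<And>z. z \<in> X - {x} \<Longrightarrow> snd z < snd x \<Longrightarrow> 2 ^ k < dist (fst x) (fst z)"
proof (cases rule: ong_xi_cases[OF \<open>finite X\<close>, of \<alpha> x])
  case 1
  then show thesis
    using that(1) by simp
next
  case (2 y)
  define r where "r = dist (fst x) (fst y)"
  have xi: "ong_xi \<alpha> x X powr p = r powr (\<alpha> * p)"
    using 2 by (simp add: r_def powr_powr)
  show thesis
  proof (cases "r \<le> 1")
    case True
    then show thesis
      using that(1) assms xi by (simp add: r_def powr_le1)
  next
    case False
    then obtain k :: nat where k: "2 ^ k < r" "r \<le> 2 ^ (k + 1)"
      using ex_dyadic_bracket[of r] by auto
    have "r \<le> 2 powr real (k + 1)"
      using k(2) by (subst powr_realpow) simp_all
    then have "r powr (\<alpha> * p) \<le> (2 powr real (k + 1)) powr (\<alpha> * p)"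
      using assms by (intro powr_mono2) (simp_all add: r_def)
    also have "\<dots> = 2 powr (real (k + 1) * (\<alpha> * p))"
      by (rule powr_powr)
    finally show thesis
      using that(2)[of y k] 2 k xi by (fastforce simp: r_def)
  qed
qed

lemma snd_scale_marked [simp]: "snd (scale_marked c x) = snd x"
  by (simp add: scale_marked_def)

lemma dist_fst_scale_marked:
  fixes x y :: "'a::real_normed_vector \<times> real"
  shows "0 \<le> c \<Longrightarrow> dist (fst (scale_marked c x)) (fst (scale_marked c y)) = c * dist (fst x) (fst y)"
  by (simp add: scale_marked_def dist_norm scaleR_diff_right[symmetric])

lemma ong_xi_scaled_dyadic_cases:
  fixes U :: "nat \<Rightarrow> (real^'d) \<times> real" and c \<alpha> p :: real
  assumes U: "\<And>i. i < n \<Longrightarrow> U i \<in> box 0 One \<times> {0..1}" and c: "0 < c" and "0 \<le> \<alpha>" "0 \<le> p"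
  obtains "ong_xi \<alpha> (scale_marked c (U 0)) (scale_marked c ` U ` {..<n}) powr p \<le> 1"
  | k :: nat where "2 ^ k < c * CARD('d)"
      "ong_xi \<alpha> (scale_marked c (U 0)) (scale_marked c ` U ` {..<n}) powr p \<le> 2 powr (real (k + 1) * (\<alpha> * p))"
      "\<And>j. j \<in> {1..<n} \<Longrightarrow> U j \<notin> near_lower (2 ^ k / (c * CARD('d))) (U 0)"
proof -
  let ?x = "scale_marked c (U 0)" and ?X = "scale_marked c ` U ` {..<n}"
  have dist_scaled: "dist (fst ?x) (fst (scale_marked c (U j))) = c * dist (fst (U 0)) (fst (U j))" for j
    using c by (simp add: dist_fst_scale_marked)
  have "finite ?X"
    by simp
  show thesis
  proof (cases rule: ong_xi_powr_dyadic_cases[where x = ?x, OF \<open>finite ?X\<close> assms(3,4)])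
    case (2 k y)
    then obtain j0 where j0: "j0 < n" "y = scale_marked c (U j0)"
      by auto
    have U0: "U 0 \<in> box 0 One \<times> {0..1}"
      using U j0 by simp
    have "2 ^ k < c * dist (fst (U 0)) (fst (U j0))"
      using 2(4)[OF 2(1,2)] j0 dist_scaled[of j0] by simp
    also have "\<dots> < c * (real CARD('d) * 1)"
      using c U0 U[OF \<open>j0 < n\<close>]
      by (intro mult_strict_left_mono dist_lt_of_mem_subcube) (auto simp: subcube_one mem_Times_iff)
    finally have "2 ^ k < c * CARD('d)"
      by simp
    moreover have "U j \<notin> near_lower (2 ^ k / (c * CARD('d))) (U 0)" if "j \<in> {1..<n}" for j
    proof
      assume near: "U j \<in> near_lower (2 ^ k / (c * CARD('d))) (U 0)"
      then have "snd (U j) < snd (U 0)"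
        by (simp add: near_lower_def mem_Times_iff)
      then have "scale_marked c (U j) \<in> ?X - {?x}"
        using that by (auto dest: arg_cong[of _ _ snd])
      then have "2 ^ k < c * dist (fst (U 0)) (fst (U j))"
        using 2(4)[of "scale_marked c (U j)"] \<open>snd (U j) < snd (U 0)\<close> dist_scaled[of j] by simp
      also have "c * dist (fst (U 0)) (fst (U j)) < c * (CARD('d) * (2 ^ k / (c * CARD('d))))"
        using c near U0 by (intro mult_strict_left_mono dist_lt_of_mem_subcube) (auto simp: near_lower_def mem_Times_iff)
      also have "\<dots> = 2 ^ k"
        using c by simp
      finally show False
        by simp
    qed
    ultimately show thesis
      using that(2) 2 by blast
  qed (use that(1) in auto)
qed

lemma scaled_ong_xi_powr_le_dyadic_sum:
  fixes U :: "nat \<Rightarrow> (real^'d) \<times> real" and c \<alpha> p :: real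
  assumes "U \<in> space (PiM {..<n} (\<lambda>_. marked_unif))" and U: "\<And>i. i < n \<Longrightarrow> U i \<in> box 0 One \<times> {0..1}"
    and "0 < c" "0 \<le> \<alpha>" "0 \<le> p"
  shows "ennreal (ong_xi \<alpha> (scale_marked c (U 0)) (scale_marked c ` U ` {..<n}) powr p)
    \<le> 1 + (\<Sum>k. ennreal (2 powr (real (k + 1) * (\<alpha> * p)))
                 * indicator {V \<in> no_near_lower n (2 ^ k / (c * CARD('d))). 2 ^ k < c * CARD('d)} U)"
    (is "_ \<le> 1 + (\<Sum>k. ?w k * indicator (?G k) U)")
proof (rule ong_xi_scaled_dyadic_cases[OF U assms(3-5)])
  assume "ong_xi \<alpha> (scale_marked c (U 0)) (scale_marked c ` U ` {..<n}) powr p \<le> 1"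
  then show ?thesis
    by (simp add: ennreal_le_1 add_increasing2)
next
  fix k
  assume k: "2 ^ k < c * CARD('d)"
    "ong_xi \<alpha> (scale_marked c (U 0)) (scale_marked c ` U ` {..<n}) powr p \<le> 2 powr (real (k + 1) * (\<alpha> * p))"
    "\<And>j. j \<in> {1..<n} \<Longrightarrow> U j \<notin> near_lower (2 ^ k / (c * CARD('d))) (U 0)"
  then have "U \<in> ?G k"
    using assms(1) by (simp add: no_near_lower_def)
  then have "ennreal (ong_xi \<alpha> (scale_marked c (U 0)) (scale_marked c ` U ` {..<n}) powr p)
      \<le> ?w k * indicator (?G k) U"
    using k by (simp add: ennreal_leI)
  also have "\<dots> = (\<Sum>i\<in>{k}. ?w i * indicator (?G i) U)"
    by (subst sum.insert) simp_all
  also have "\<dots> \<le> (\<Sum>i. ?w i * indicator (?G i) U)"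
    by (intro sum_le_suminf summableI) simp_all
  finally show ?thesis
    by (simp add: add_increasing)
qed

lemma emeasure_dyadic_no_near_lower_le:
  fixes c :: real and n k :: nat
  assumes "0 < c" "c ^ CARD('d) = n" "0 < n"
  shows "emeasure (PiM {..<n} (\<lambda>_. marked_unif :: ((real^'d) \<times> real) measure))
           {V \<in> no_near_lower n (2 ^ k / (c * CARD('d))). 2 ^ k < c * CARD('d)}
         \<le> real CARD('d) ^ CARD('d) / (2 ^ k) ^ CARD('d)"
proof (cases "2 ^ k < c * CARD('d)")
  case True
  define s where "s = 2 ^ k / (c * CARD('d))"
  have s: "0 < s" "s \<le> 1"
    using True \<open>0 < c\<close> by (simp_all add: s_def)
  have "emeasure (PiM {..<n} (\<lambda>_. marked_unif)) (no_near_lower n s :: (nat \<Rightarrow> (real^'d) \<times> real) set)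
      \<le> 1 / (s ^ CARD('d) * n)"
    using s \<open>0 < n\<close> by (rule emeasure_no_near_lower_le)
  also have "1 / (s ^ CARD('d) * n) = real CARD('d) ^ CARD('d) / (2 ^ k) ^ CARD('d)"
    using assms by (simp add: s_def power_divide power_mult_distrib field_simps)
  finally show ?thesis
    using True by (simp add: s_def)
qed simp

lemma nn_integral_scaled_ong_xi_powr_le:
  fixes \<alpha> p :: real and n :: nat
  assumes "0 \<le> \<alpha>" "0 \<le> p" "0 < n"
  defines "c \<equiv> real n powr (1 / real CARD('d))"
  shows "(\<integral>\<^sup>+U. ennreal (ong_xi \<alpha> (scale_marked c (U 0)) (scale_marked c ` U ` {..<n}) powr p)
            \<partial>PiM {..<n} (\<lambda>_. marked_unif :: ((real^'d) \<times> real) measure))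
         \<le> 1 + (\<Sum>k. ennreal (2 powr (real (k + 1) * (\<alpha> * p)) * (real CARD('d) ^ CARD('d) / (2 ^ k) ^ CARD('d))))"
proof -
  let ?P = "PiM {..<n} (\<lambda>_. marked_unif :: ((real^'d) \<times> real) measure)"
  let ?w = "\<lambda>k::nat. 2 powr (real (k + 1) * (\<alpha> * p))"
  define G :: "nat \<Rightarrow> (nat \<Rightarrow> (real^'d) \<times> real) set"
    where "G k = {V \<in> no_near_lower n (2 ^ k / (c * CARD('d))). 2 ^ k < c * CARD('d)}" for k
  have "0 < c" "c ^ CARD('d) = n"
    using \<open>0 < n\<close> by (simp_all add: c_def powr_inverse_root)
  have [measurable]: "G k \<in> sets ?P" for k
    using \<open>0 < n\<close> unfolding G_def by measurable
  have "(\<integral>\<^sup>+U. ennreal (ong_xi \<alpha> (scale_marked c (U 0)) (scale_marked c ` U ` {..<n}) powr p) \<partial>?P)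
      \<le> (\<integral>\<^sup>+U. 1 + (\<Sum>k. ennreal (?w k) * indicator (G k) U) \<partial>?P)"
  proof (rule nn_integral_mono_AE)
    show "AE U in ?P. ennreal (ong_xi \<alpha> (scale_marked c (U 0)) (scale_marked c ` U ` {..<n}) powr p)
        \<le> 1 + (\<Sum>k. ennreal (?w k) * indicator (G k) U)"
      using AE_space AE_PiM_marked_unif
    proof eventually_elim
      case (elim U)
      have "U i \<in> box 0 One \<times> {0..1}" if "i < n" for i
        using elim(2) that by simp
      then show ?case
        unfolding G_def by (rule scaled_ong_xi_powr_le_dyadic_sum[OF elim(1) _ \<open>0 < c\<close> assms(1,2)])
    qed
  qed
  also have "\<dots> = 1 + (\<Sum>k. ennreal (?w k) * emeasure ?P (G k))"
    by (simp add: nn_integral_add nn_integral_suminf nn_integral_cmult_indicator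
        prob_space.emeasure_space_1[OF prob_space_PiM[OF prob_space_marked_unif]])
  also have "\<dots> \<le> 1 + (\<Sum>k. ennreal (?w k * (real CARD('d) ^ CARD('d) / (2 ^ k) ^ CARD('d))))"
  proof (intro add_left_mono suminf_le summableI)
    show "ennreal (?w k) * emeasure ?P (G k) \<le> ennreal (?w k * (real CARD('d) ^ CARD('d) / (2 ^ k) ^ CARD('d)))" for k
      unfolding G_def using mult_left_mono[OF emeasure_dyadic_no_near_lower_le[OF \<open>0 < c\<close> \<open>c ^ CARD('d) = n\<close> \<open>0 < n\<close>], of "ennreal (?w k)" k]
      by (subst ennreal_mult') simp_all
  qed
  finally show ?thesis .
qed

lemma summable_dyadic_weights:
  fixes q C :: real and m :: nat
  assumes "q < m"
  shows "summable (\<lambda>k::nat. 2 powr (real (k + 1) * q) * (C / (2 ^ k) ^ m))"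
proof -
  define r where "r = 2 powr q / 2 ^ m"
  have "2 powr q < 2 powr real m"
    using assms by (intro powr_less_mono) auto
  then have "r < 1"
    by (simp add: r_def powr_realpow)
  have "2 powr (real (k + 1) * q) * (C / (2 ^ k) ^ m) = (2 powr q * C) * r ^ k" for k :: nat
  proof -
    have "2 powr (real (k + 1) * q) = 2 powr q * (2 powr q) ^ k"
      by (simp add: powr_add powr_powr[symmetric] powr_realpow algebra_simps)
    moreover have "((2::real) ^ k) ^ m = (2 ^ m) ^ k"
      by (simp add: power_mult[symmetric] mult.commute)
    ultimately show ?thesis
      by (simp add: r_def power_divide)
  qed
  moreover have "summable (\<lambda>k. (2 powr q * C) * r ^ k)"
    using \<open>r < 1\<close> by (intro summable_mult summable_geometric) (simp add: r_def)
  ultimately show ?thesis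
    by simp
qed

theorem lemma2:
  fixes \<alpha> p :: real
  assumes "0 \<le> \<alpha>" and "\<alpha> < real CARD('d::finite)" and "p > 1" and "\<alpha> * p < real CARD('d)"
  shows "(SUP n\<in>{1::nat..}.
            \<integral>\<^sup>+ U. ennreal ((ong_xi \<alpha> (scale_marked (real n powr (1 / real CARD('d))) (U 0))
                         (scale_marked (real n powr (1 / real CARD('d))) ` U ` {..<n})) powr p)
            \<partial>(PiM {..<n} (\<lambda>_. (marked_unif :: ((real^'d) \<times> real) measure)))) < \<infinity>"
proof -
  define b where "b k = 2 powr (real (k + 1) * (\<alpha> * p)) * (real CARD('d) ^ CARD('d) / (2 ^ k) ^ CARD('d))"
    for k :: nat
  have "summable b"
    unfolding b_def using assms(4) by (rule summable_dyadic_weights)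
  have "(SUP n\<in>{1::nat..}.
            \<integral>\<^sup>+ U. ennreal ((ong_xi \<alpha> (scale_marked (real n powr (1 / real CARD('d))) (U 0))
                         (scale_marked (real n powr (1 / real CARD('d))) ` U ` {..<n})) powr p)
            \<partial>(PiM {..<n} (\<lambda>_. (marked_unif :: ((real^'d) \<times> real) measure)))) \<le> 1 + (\<Sum>k. ennreal (b k))"
    using assms(1,3) unfolding b_def by (intro SUP_least nn_integral_scaled_ong_xi_powr_le) auto
  also have "(\<Sum>k. ennreal (b k)) = ennreal (\<Sum>k. b k)"
  proof (rule suminf_ennreal2)
    show "0 \<le> b k" for k
      by (simp add: b_def)
  qed fact
  also have "1 + ennreal (\<Sum>k. b k) < \<infinity>"
    by (simp flip: ennreal_1)
  finally show ?thesis .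
qed

end
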